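(* Let $R=\mathbb{R}[t_1,\dots,t_n]$, let $k\ge 0$, and let $R_{\le k}\subset R$ be the $\mathbb{R}$-vector space of polynomials of total degree $\le k$. For every $\mathbb{R}$-linear map $A:R_{\le k}\to R$ there exists a differential operator $D\in\mathrm{Diff}^k(R)$ whose restriction $D|_{R_{\le k}}:R_{\le k}\to R$ equals $A$.
   Context: For a commutative algebra $R$ over a field $\Bbbk$, for $a\in R$ let $m_a:R\to R$, $b\mapsto ab$. The differential operators of order $0$ are the $R$-module endomorphisms of $R$, i.e. $\mathrm{Diff}^0(R)=\{m_a: a\in R\}$. Inductively, for $i\ge 1$, a $\Bbbk$-linear map $D:R\to R$ is a differential operator of order $i$, written $D\in\mathrm{Diff}^i(R)$, if for every $D^0\in \mathrm{Diff}^0(R)$ the commutator $[D,D^0]=D\circ D^0-D^0\circ D$ lies in $\mathrm{Diff}^{i-1}(R)$. Here $R=\mathbb{R}[t_1,\dots,t_n]$ is regarded as an $\mathbb{R}$-algebra. *)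

theory Defs
  imports Complex_Main "HOL-Library.Poly_Mapping"
begin

text \<open>Polynomials over the reals: finitely supported maps from monomials
(exponent vectors, finitely supported maps nat to nat) to real coefficients,
with the library's convolution product.  The ring R[t_1,...,t_n] is the
carrier set of polynomials whose monomials only involve variables 0..n-1.\<close>

type_synonym rpoly = "(nat \<Rightarrow>\<^sub>0 nat) \<Rightarrow>\<^sub>0 real"

definition polyR :: "nat \<Rightarrow> rpoly set" where
  "polyR n = {p. \<forall>m \<in> Poly_Mapping.keys p. \<forall>i \<in> Poly_Mapping.keys m. i < n}"

definition const_poly :: "real \<Rightarrow> rpoly" where
  "const_poly c = Poly_Mapping.single 0 c"

definition mdeg :: "(nat \<Rightarrow>\<^sub>0 nat) \<Rightarrow> nat" where
  "mdeg m = (\<Sum>i\<in>Poly_Mapping.keys m. Poly_Mapping.lookup m i)"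

definition polyR_le :: "nat \<Rightarrow> nat \<Rightarrow> rpoly set" where
  "polyR_le n k = {p \<in> polyR n. \<forall>m \<in> Poly_Mapping.keys p. mdeg m \<le> k}"

definition real_linear_on :: "rpoly set \<Rightarrow> (rpoly \<Rightarrow> rpoly) \<Rightarrow> bool" where
  "real_linear_on S D \<longleftrightarrow>
     (\<forall>p\<in>S. \<forall>q\<in>S. D (p + q) = D p + D q) \<and>
     (\<forall>c. \<forall>p\<in>S. D (const_poly c * p) = const_poly c * D p)"

text \<open>Differential operators of order i on R = polyR n (Grothendieck's inductive
definition); only the values of D on R matter.\<close>
fun is_diff :: "nat \<Rightarrow> nat \<Rightarrow> (rpoly \<Rightarrow> rpoly) \<Rightarrow> bool" where
  "is_diff n 0 D = (\<exists>a\<in>polyR n. \<forall>b\<in>polyR n. D b = a * b)"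
| "is_diff n (Suc i) D =
     ((\<forall>p\<in>polyR n. D p \<in> polyR n) \<and> real_linear_on (polyR n) D \<and>
      (\<forall>a\<in>polyR n. is_diff n i (\<lambda>b. D (a * b) - a * D b)))"

end

theory Submission
  imports Defs
begin

text \<open>Commuting a partial derivative past a multiplication operator lowers the order by one
(Leibniz rule), so a \<partial>^\<beta> is a differential operator of order |\<beta>|.  For |\<beta>| \<le> k, a scalar
multiple of q \<partial>^\<beta> sends t^\<beta> to q and kills every other monomial of degree at most |\<beta>|;
by downward induction on |\<beta>| its values on the monomials of larger degree at most k are cancelled
by order-k operators.  This gives, for every monomial t^\<beta> of R_{\<le>k}, an order-k operator
sending t^\<beta> to A t^\<beta> and all other monomials of R_{\<le>k} to 0; their sum agrees with A on the
monomial basis of R_{\<le>k}, hence on R_{\<le>k}.\<close>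

abbreviation var_exp :: "nat \<Rightarrow> (nat \<Rightarrow>\<^sub>0 nat)" where
  "var_exp i \<equiv> Poly_Mapping.single i 1"

lemma lookup_const_poly_mult:
  "Poly_Mapping.lookup (const_poly c * p) m = c * Poly_Mapping.lookup p m"
  unfolding const_poly_def
  by (simp flip: mult_map_scale_conv_mult add: Poly_Mapping.map.rep_eq when_def)

lemma const_poly_mult_const_poly: "const_poly a * const_poly b = const_poly (a * b)"
  unfolding const_poly_def by (simp add: mult_single)

lemma const_poly_zero [simp]: "const_poly 0 = 0"
  unfolding const_poly_def by simp

lemma const_poly_one [simp]: "const_poly 1 = 1"
  unfolding const_poly_def by simp

lemma single_eq_const_poly_mult: "Poly_Mapping.single m c = const_poly c * Poly_Mapping.single m 1"
  unfolding const_poly_def by (simp add: mult_single)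

lemma poly_mapping_eq_sum_single:
  "p = (\<Sum>m\<in>Poly_Mapping.keys p. Poly_Mapping.single m (Poly_Mapping.lookup p m))"
  by (rule poly_mapping_eqI) (simp add: lookup_sum lookup_single when_def in_keys_iff)

lemma poly_mapping_single_induct [case_names zero single add]:
  fixes p :: "'a \<Rightarrow>\<^sub>0 'b::comm_monoid_add"
  assumes "P 0" "\<And>m c. P (Poly_Mapping.single m c)" "\<And>p q. P p \<Longrightarrow> P q \<Longrightarrow> P (p + q)"
  shows "P p"
proof -
  have "P (\<Sum>m\<in>S. Poly_Mapping.single m (Poly_Mapping.lookup p m))" if "finite S" for S
    using that by (induction S rule: finite_induct) (auto intro: assms)
  then show ?thesis using poly_mapping_eq_sum_single[of p] by (metis finite_keys)
qed

section \<open>Partial derivatives\<close>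

definition partial_deriv :: "nat \<Rightarrow> rpoly \<Rightarrow> rpoly" where
  "partial_deriv i p = Abs_poly_mapping
     (\<lambda>m. real (Poly_Mapping.lookup m i + 1) * Poly_Mapping.lookup p (m + var_exp i))"

lemma lookup_partial_deriv:
  "Poly_Mapping.lookup (partial_deriv i p) m =
     real (Poly_Mapping.lookup m i + 1) * Poly_Mapping.lookup p (m + var_exp i)"
proof -
  have "finite ((\<lambda>m. m + var_exp i) -` {m. Poly_Mapping.lookup p m \<noteq> 0})"
    by (rule finite_vimageI) (auto simp: inj_def)
  then have "finite {m. real (Poly_Mapping.lookup m i + 1) * Poly_Mapping.lookup p (m + var_exp i) \<noteq> 0}"
    by (rule rev_finite_subset) auto
  then show ?thesis unfolding partial_deriv_def by simp
qed

lemma partial_deriv_add: "partial_deriv i (p + q) = partial_deriv i p + partial_deriv i q"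
  by (rule poly_mapping_eqI) (simp add: lookup_partial_deriv lookup_add algebra_simps)

lemma partial_deriv_diff: "partial_deriv i (p - q) = partial_deriv i p - partial_deriv i q"
  by (rule poly_mapping_eqI) (simp add: lookup_partial_deriv lookup_minus algebra_simps)

lemma partial_deriv_zero [simp]: "partial_deriv i 0 = 0"
  by (rule poly_mapping_eqI) (simp add: lookup_partial_deriv)

lemma partial_deriv_const_poly_mult:
  "partial_deriv i (const_poly c * p) = const_poly c * partial_deriv i p"
  by (rule poly_mapping_eqI) (simp add: lookup_partial_deriv lookup_const_poly_mult)

lemma diff_var_exp_add:
  assumes "Poly_Mapping.lookup a i > 0"
  shows "a - var_exp i + b = a + b - var_exp i"
  by (rule poly_mapping_eqI) (use assms in \<open>auto simp: lookup_add lookup_minus lookup_single when_def\<close>)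

text \<open>If t_i does not occur in t^a the coefficient vanishes, so the junk exponent a - var_exp i = a
is harmless.\<close>
lemma partial_deriv_single:
  "partial_deriv i (Poly_Mapping.single a u) =
     Poly_Mapping.single (a - var_exp i) (u * real (Poly_Mapping.lookup a i))"
proof (rule poly_mapping_eqI)
  fix m
  show "Poly_Mapping.lookup (partial_deriv i (Poly_Mapping.single a u)) m =
    Poly_Mapping.lookup (Poly_Mapping.single (a - var_exp i) (u * real (Poly_Mapping.lookup a i))) m"
  proof (cases "a = m + var_exp i")
    case True
    then have "a - var_exp i = m" "Poly_Mapping.lookup a i = Poly_Mapping.lookup m i + 1"
      by (simp_all add: lookup_add)
    with True show ?thesis by (simp add: lookup_partial_deriv lookup_single)
  next
    case False
    have "u * real (Poly_Mapping.lookup a i) = 0" if "a - var_exp i = m"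
    proof (rule ccontr)
      assume "u * real (Poly_Mapping.lookup a i) \<noteq> 0"
      then have "a = m + var_exp i"
        using that diff_var_exp_add[of a i "var_exp i"] by simp
      with False show False by simp
    qed
    with False show ?thesis by (auto simp: lookup_partial_deriv lookup_single when_def)
  qed
qed

lemma partial_deriv_single_mult_single:
  "partial_deriv i (Poly_Mapping.single a u) * Poly_Mapping.single b v =
     Poly_Mapping.single (a + b - var_exp i) (u * v * real (Poly_Mapping.lookup a i))"
proof (cases "Poly_Mapping.lookup a i > 0")
  case True
  then have "b + (a - var_exp i) = a + b - var_exp i"
    using diff_var_exp_add by (simp add: add.commute)
  then show ?thesis by (simp add: partial_deriv_single mult_single mult_ac)
next
  case False
  then show ?thesis by (simp add: partial_deriv_single mult_single)
qed

lemma partial_deriv_mult_single: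
  "partial_deriv i (Poly_Mapping.single a u * Poly_Mapping.single b v) =
     partial_deriv i (Poly_Mapping.single a u) * Poly_Mapping.single b v
     + Poly_Mapping.single a u * partial_deriv i (Poly_Mapping.single b v)"
  using partial_deriv_single_mult_single[of i a u b v] partial_deriv_single_mult_single[of i b v a u]
  by (simp add: partial_deriv_single mult_single lookup_add single_add[symmetric] algebra_simps)

lemma partial_deriv_mult:
  "partial_deriv i (p * q) = partial_deriv i p * q + p * partial_deriv i q"
proof (induction p rule: poly_mapping_single_induct)
  case zero then show ?case by simp
next
  case (single a u)
  show ?case
  proof (induction q rule: poly_mapping_single_induct)
    case zero then show ?case by simp
  next
    case (single b v) then show ?case by (rule partial_deriv_mult_single)
  next
    case (add q1 q2) then show ?case by (simp add: distrib_left partial_deriv_add algebra_simps)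
  qed
next
  case (add p1 p2) then show ?case by (simp add: distrib_right partial_deriv_add algebra_simps)
qed

section \<open>Differential operators\<close>

lemma polyR_add: "p \<in> polyR n \<Longrightarrow> q \<in> polyR n \<Longrightarrow> p + q \<in> polyR n"
  using keys_add[of p q] unfolding polyR_def by blast

lemma polyR_diff: "p \<in> polyR n \<Longrightarrow> q \<in> polyR n \<Longrightarrow> p - q \<in> polyR n"
  using keys_diff[of p q] unfolding polyR_def by blast

lemma polyR_mult:
  assumes "p \<in> polyR n" and "q \<in> polyR n"
  shows "p * q \<in> polyR n"
  unfolding polyR_def mem_Collect_eq
proof (intro ballI)
  fix m i
  assume "m \<in> Poly_Mapping.keys (p * q)" and i: "i \<in> Poly_Mapping.keys m"
  then obtain a b where ab: "m = a + b" "a \<in> Poly_Mapping.keys p" "b \<in> Poly_Mapping.keys q"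
    using keys_mult[of p q] by blast
  with i keys_add[of a b] have "i \<in> Poly_Mapping.keys a \<or> i \<in> Poly_Mapping.keys b" by blast
  with ab assms show "i < n" unfolding polyR_def by blast
qed

lemma polyR_zero: "0 \<in> polyR n"
  unfolding polyR_def by simp

lemma polyR_one: "1 \<in> polyR n"
  unfolding polyR_def by simp

lemma polyR_const_poly: "const_poly c \<in> polyR n"
  unfolding polyR_def const_poly_def by simp

lemma polyR_partial_deriv:
  assumes "p \<in> polyR n"
  shows "partial_deriv i p \<in> polyR n"
  unfolding polyR_def mem_Collect_eq
proof (intro ballI)
  fix m j
  assume "m \<in> Poly_Mapping.keys (partial_deriv i p)" and "j \<in> Poly_Mapping.keys m"
  then have "m + var_exp i \<in> Poly_Mapping.keys p" "j \<in> Poly_Mapping.keys (m + var_exp i)"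
    by (simp_all add: in_keys_iff lookup_partial_deriv lookup_add)
  with assms show "j < n" unfolding polyR_def by blast
qed

lemma is_diff_cong:
  assumes "is_diff n i D" "\<And>p. p \<in> polyR n \<Longrightarrow> D p = E p"
  shows "is_diff n i E"
  using assms
proof (induction i arbitrary: D E)
  case 0 then show ?case by auto
next
  case (Suc i)
  have "real_linear_on (polyR n) D" using Suc.prems(1) by simp
  then have "real_linear_on (polyR n) E"
    using Suc.prems(2) unfolding real_linear_on_def
    by (simp add: polyR_add polyR_mult polyR_const_poly)
  moreover have "is_diff n i (\<lambda>b. E (a * b) - a * E b)" if a: "a \<in> polyR n" for a
  proof -
    have "is_diff n i (\<lambda>b. D (a * b) - a * D b)" using Suc.prems(1) a by simp
    then show ?thesis by (rule Suc.IH) (simp add: Suc.prems(2) polyR_mult a)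
  qed
  ultimately show ?case using Suc.prems by auto
qed

lemma is_diff_lincomb:
  assumes "is_diff n i D" "is_diff n i E" "a \<in> polyR n" "b \<in> polyR n"
  shows "is_diff n i (\<lambda>p. a * D p + b * E p)"
  using assms
proof (induction i arbitrary: D E)
  case 0
  then obtain d e where d: "d \<in> polyR n" "\<forall>x\<in>polyR n. D x = d * x"
    and e: "e \<in> polyR n" "\<forall>x\<in>polyR n. E x = e * x" by auto
  have "a * d + b * e \<in> polyR n" using d e 0 by (simp add: polyR_add polyR_mult)
  moreover have "\<forall>x\<in>polyR n. a * D x + b * E x = (a * d + b * e) * x"
    using d e by (simp add: algebra_simps)
  ultimately show ?case by auto
next
  case (Suc i)
  have "real_linear_on (polyR n) D" "real_linear_on (polyR n) E" using Suc.prems by simp_all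
  then have "real_linear_on (polyR n) (\<lambda>p. a * D p + b * E p)"
    unfolding real_linear_on_def by (simp add: algebra_simps)
  moreover have "\<forall>p\<in>polyR n. a * D p + b * E p \<in> polyR n"
    using Suc.prems by (simp add: polyR_add polyR_mult)
  moreover have "is_diff n i (\<lambda>y. (a * D (x * y) + b * E (x * y)) - x * (a * D y + b * E y))"
    if x: "x \<in> polyR n" for x
  proof -
    have "is_diff n i (\<lambda>y. a * (D (x * y) - x * D y) + b * (E (x * y) - x * E y))"
      using Suc.prems x by (intro Suc.IH) auto
    then show ?thesis by (rule is_diff_cong) (simp add: algebra_simps)
  qed
  ultimately show ?case by simp
qed

lemma is_diff_zero: "is_diff n i (\<lambda>_. 0)"
  by (induction i) (use polyR_zero in \<open>force simp: real_linear_on_def\<close>)+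

lemma is_diff_add: "is_diff n i D \<Longrightarrow> is_diff n i E \<Longrightarrow> is_diff n i (\<lambda>p. D p + E p)"
  using is_diff_lincomb[of n i D E 1 1] polyR_one by simp

lemma is_diff_diff: "is_diff n i D \<Longrightarrow> is_diff n i E \<Longrightarrow> is_diff n i (\<lambda>p. D p - E p)"
  using is_diff_lincomb[of n i D E 1 "-1"] polyR_one polyR_diff[OF polyR_zero polyR_one] by simp

lemma is_diff_mult_left: "is_diff n i D \<Longrightarrow> a \<in> polyR n \<Longrightarrow> is_diff n i (\<lambda>p. a * D p)"
  using is_diff_lincomb[of n i D D a 0] polyR_zero by simp

lemma is_diff_sum:
  "finite S \<Longrightarrow> (\<And>x. x \<in> S \<Longrightarrow> is_diff n i (F x)) \<Longrightarrow> is_diff n i (\<lambda>p. \<Sum>x\<in>S. F x p)"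
  by (induction S rule: finite_induct) (auto intro: is_diff_add is_diff_zero)

lemma is_diff_polyR: "is_diff n i D \<Longrightarrow> p \<in> polyR n \<Longrightarrow> D p \<in> polyR n"
  by (cases i) (auto intro: polyR_mult)

lemma is_diff_Suc: "is_diff n i D \<Longrightarrow> is_diff n (Suc i) D"
proof (induction i arbitrary: D)
  case 0
  then obtain d where d: "d \<in> polyR n" "\<forall>x\<in>polyR n. D x = d * x" by auto
  have "real_linear_on (polyR n) D"
    using d unfolding real_linear_on_def by (simp add: polyR_add polyR_const_poly polyR_mult algebra_simps)
  moreover have "is_diff n 0 (\<lambda>b. D (a * b) - a * D b)" if "a \<in> polyR n" for a
    using d that by (intro is_diff_cong[OF is_diff_zero]) (simp add: polyR_mult)
  ultimately show ?case using d by (simp add: polyR_mult)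
next
  case (Suc i)
  then have "\<forall>p\<in>polyR n. D p \<in> polyR n" "real_linear_on (polyR n) D"
    "\<forall>a\<in>polyR n. is_diff n i (\<lambda>b. D (a * b) - a * D b)"
    by simp_all
  with Suc.IH show ?case by (subst is_diff.simps(2)) blast
qed

lemma is_diff_mono:
  assumes "is_diff n i D" "i \<le> j"
  shows "is_diff n j D"
  using assms(2) by (induction j rule: dec_induct) (auto intro: assms(1) is_diff_Suc simp del: is_diff.simps)

lemma real_linear_on_partial_deriv_comp:
  "real_linear_on (polyR n) E \<Longrightarrow> real_linear_on (polyR n) (\<lambda>p. partial_deriv i (E p))"
  unfolding real_linear_on_def by (simp add: partial_deriv_add partial_deriv_const_poly_mult)

text \<open>By the Leibniz rule, the commutator of \<partial>_i \<circ> E with multiplication by a is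
\<partial>_i \<circ> [E, a] + (\<partial>_i a) E.\<close>
lemma is_diff_partial_deriv_comp_Suc:
  assumes E: "is_diff n j E"
    and comm: "\<And>a. a \<in> polyR n \<Longrightarrow> is_diff n j (\<lambda>b. partial_deriv i (E (a * b) - a * E b))"
  shows "is_diff n (Suc j) (\<lambda>p. partial_deriv i (E p))"
proof -
  have "is_diff n j (\<lambda>b. partial_deriv i (E (a * b)) - a * partial_deriv i (E b))"
    if a: "a \<in> polyR n" for a
  proof -
    have "is_diff n j (\<lambda>b. partial_deriv i (E (a * b) - a * E b) + partial_deriv i a * E b)"
      using comm a E by (intro is_diff_add is_diff_mult_left polyR_partial_deriv)
    then show ?thesis by (rule is_diff_cong) (simp add: partial_deriv_diff partial_deriv_mult)
  qed
  moreover have "real_linear_on (polyR n) (\<lambda>p. partial_deriv i (E p))"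
    using is_diff_Suc[OF E] by (simp add: real_linear_on_partial_deriv_comp)
  ultimately show ?thesis using E by (simp add: is_diff_polyR polyR_partial_deriv)
qed

lemma is_diff_partial_deriv_comp:
  "is_diff n j E \<Longrightarrow> is_diff n (Suc j) (\<lambda>p. partial_deriv i (E p))"
proof (induction j arbitrary: E)
  case 0
  then obtain e where "\<forall>b\<in>polyR n. E b = e * b" by auto
  then have "is_diff n 0 (\<lambda>b. partial_deriv i (E (a * b) - a * E b))" if "a \<in> polyR n" for a
    using that by (intro is_diff_cong[OF is_diff_zero]) (simp add: polyR_mult mult.left_commute)
  with 0 show ?case by (intro is_diff_partial_deriv_comp_Suc)
next
  case (Suc j)
  then show ?case by (intro is_diff_partial_deriv_comp_Suc Suc.IH) auto
qed

section \<open>Iterated partial derivatives\<close>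

lemma mdeg_eq_sum:
  "finite S \<Longrightarrow> Poly_Mapping.keys m \<subseteq> S \<Longrightarrow> mdeg m = (\<Sum>i\<in>S. Poly_Mapping.lookup m i)"
  unfolding mdeg_def by (rule sum.mono_neutral_left) (auto simp: in_keys_iff)

lemma mdeg_add: "mdeg (a + b) = mdeg a + mdeg b"
proof -
  let ?S = "Poly_Mapping.keys a \<union> Poly_Mapping.keys b"
  have "mdeg (a + b) = (\<Sum>i\<in>?S. Poly_Mapping.lookup (a + b) i)"
    using keys_add[of a b] by (intro mdeg_eq_sum) auto
  also have "\<dots> = (\<Sum>i\<in>?S. Poly_Mapping.lookup a i) + (\<Sum>i\<in>?S. Poly_Mapping.lookup b i)"
    by (simp add: lookup_add sum.distrib)
  also have "\<dots> = mdeg a + mdeg b"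
    by (simp add: mdeg_eq_sum[symmetric])
  finally show ?thesis .
qed

lemma mdeg_zero [simp]: "mdeg 0 = 0"
  unfolding mdeg_def by simp

lemma mdeg_single [simp]: "mdeg (Poly_Mapping.single i j) = j"
  unfolding mdeg_def by simp

lemma mdeg_eq_0_iff: "mdeg m = 0 \<longleftrightarrow> m = 0"
  unfolding mdeg_def by (auto simp: in_keys_iff intro!: poly_mapping_eqI)

lemma eq_of_lookup_le_of_mdeg_le:
  assumes "\<forall>j. Poly_Mapping.lookup a j \<le> Poly_Mapping.lookup g j" and "mdeg g \<le> mdeg a"
  shows "g = a"
proof -
  have g: "g = a + (g - a)"
    by (rule poly_mapping_eqI) (use assms(1) in \<open>simp add: lookup_add lookup_minus\<close>)
  then have "mdeg g = mdeg a + mdeg (g - a)" by (metis mdeg_add)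
  with assms(2) have "g - a = 0" by (simp add: mdeg_eq_0_iff)
  with g show ?thesis by simp
qed

text \<open>A list of variables L encodes the monomial operator \<partial>^\<beta> with \<beta> = exp_of_vars L.\<close>

fun partial_derivs :: "nat list \<Rightarrow> rpoly \<Rightarrow> rpoly" where
  "partial_derivs [] p = p"
| "partial_derivs (i # L) p = partial_deriv i (partial_derivs L p)"

fun exp_of_vars :: "nat list \<Rightarrow> (nat \<Rightarrow>\<^sub>0 nat)" where
  "exp_of_vars [] = 0"
| "exp_of_vars (i # L) = exp_of_vars L + var_exp i"

fun partial_derivs_coeff :: "nat list \<Rightarrow> (nat \<Rightarrow>\<^sub>0 nat) \<Rightarrow> real" where
  "partial_derivs_coeff [] g = 1"
| "partial_derivs_coeff (i # L) g =
     partial_derivs_coeff L g * real (Poly_Mapping.lookup (g - exp_of_vars L) i)"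

lemma is_diff_partial_derivs: "is_diff n (length L) (partial_derivs L)"
proof (induction L)
  case Nil
  have "\<forall>b\<in>polyR n. partial_derivs [] b = 1 * b" by simp
  then show ?case using polyR_one by (auto simp del: partial_derivs.simps)
next
  case (Cons i L)
  then show ?case using is_diff_partial_deriv_comp[of n "length L" "partial_derivs L" i] by simp
qed

lemma partial_derivs_single:
  "partial_derivs L (Poly_Mapping.single g u) =
     Poly_Mapping.single (g - exp_of_vars L) (u * partial_derivs_coeff L g)"
  by (induction L) (simp_all add: partial_deriv_single diff_diff_add mult_ac)

lemma partial_derivs_coeff_nonzero_iff:
  "partial_derivs_coeff L g \<noteq> 0 \<longleftrightarrow>
     (\<forall>j. Poly_Mapping.lookup (exp_of_vars L) j \<le> Poly_Mapping.lookup g j)"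
proof (induction L)
  case Nil then show ?case by simp
next
  case (Cons i L)
  have lookup_Cons: "Poly_Mapping.lookup (exp_of_vars (i # L)) j =
      Poly_Mapping.lookup (exp_of_vars L) j + (if i = j then 1 else 0)" for j
    by (simp add: lookup_add lookup_single)
  have "(\<forall>j. Poly_Mapping.lookup (exp_of_vars L) j + (if i = j then 1 else 0) \<le> Poly_Mapping.lookup g j)
    \<longleftrightarrow> (\<forall>j. Poly_Mapping.lookup (exp_of_vars L) j \<le> Poly_Mapping.lookup g j) \<and>
        Poly_Mapping.lookup (exp_of_vars L) i < Poly_Mapping.lookup g i"
    by force
  with Cons.IH show ?case unfolding lookup_Cons by (simp add: lookup_minus not_le)
qed

lemma mdeg_exp_of_vars: "mdeg (exp_of_vars L) = length L"
  by (induction L) (simp_all add: mdeg_add)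

lemma keys_exp_of_vars: "Poly_Mapping.keys (exp_of_vars L) = set L"
  by (induction L) (simp_all add: set_eq_iff in_keys_iff lookup_add lookup_single when_def)

lemma exp_of_vars_append: "exp_of_vars (L @ M) = exp_of_vars L + exp_of_vars M"
  by (induction L) (simp_all add: ac_simps)

lemma exp_of_vars_replicate: "exp_of_vars (replicate j i) = Poly_Mapping.single i j"
  by (induction j) (simp_all add: single_add[symmetric])

lemma exp_of_vars_surj: "\<exists>L. exp_of_vars L = b"
proof (induction b rule: poly_mapping_single_induct)
  case zero then show ?case using exp_of_vars.simps(1) by blast
next
  case (single i j) then show ?case using exp_of_vars_replicate by blast
next
  case (add b c) then show ?case using exp_of_vars_append by metis
qed

lemma partial_derivs_single_one:
  assumes "mdeg h \<le> length L"
  shows "partial_derivs L (Poly_Mapping.single h 1) =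
    (if h = exp_of_vars L then const_poly (partial_derivs_coeff L h) else 0)"
proof (cases "h = exp_of_vars L")
  case True then show ?thesis by (simp add: partial_derivs_single const_poly_def)
next
  case False
  have "partial_derivs_coeff L h = 0"
  proof (rule ccontr)
    assume "partial_derivs_coeff L h \<noteq> 0"
    with assms have "h = exp_of_vars L"
      by (intro eq_of_lookup_le_of_mdeg_le) (simp_all add: partial_derivs_coeff_nonzero_iff mdeg_exp_of_vars)
    with False show False ..
  qed
  with False show ?thesis by (simp add: partial_derivs_single)
qed

lemma partial_derivs_coeff_exp_of_vars: "partial_derivs_coeff L (exp_of_vars L) \<noteq> 0"
  by (simp add: partial_derivs_coeff_nonzero_iff)

section \<open>The monomial basis of R_{\<le>k}\<close>

definition monomial_exps :: "nat \<Rightarrow> nat \<Rightarrow> (nat \<Rightarrow>\<^sub>0 nat) set" where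
  "monomial_exps n k = {g. (\<forall>i\<in>Poly_Mapping.keys g. i < n) \<and> mdeg g \<le> k}"

lemma finite_monomial_exps: "finite (monomial_exps n k)"
proof -
  have "monomial_exps n k \<subseteq> exp_of_vars ` {L. set L \<subseteq> {..<n} \<and> length L \<le> k}"
  proof
    fix g assume g: "g \<in> monomial_exps n k"
    obtain L where L: "exp_of_vars L = g" using exp_of_vars_surj by blast
    with g have "set L \<subseteq> {..<n} \<and> length L \<le> k"
      unfolding monomial_exps_def by (auto simp: keys_exp_of_vars mdeg_exp_of_vars)
    with L show "g \<in> exp_of_vars ` {L. set L \<subseteq> {..<n} \<and> length L \<le> k}" by blast
  qed
  then show ?thesis by (rule finite_subset) (simp add: finite_lists_length_le)
qed

lemma single_in_polyR: "g \<in> monomial_exps n k \<Longrightarrow> Poly_Mapping.single g c \<in> polyR n"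
  unfolding monomial_exps_def polyR_def by auto

lemma single_in_polyR_le: "g \<in> monomial_exps n k \<Longrightarrow> Poly_Mapping.single g c \<in> polyR_le n k"
  unfolding monomial_exps_def polyR_le_def polyR_def by auto

lemma keys_subset_monomial_exps: "p \<in> polyR_le n k \<Longrightarrow> Poly_Mapping.keys p \<subseteq> monomial_exps n k"
  unfolding monomial_exps_def polyR_le_def polyR_def by auto

lemma polyR_le_subset_polyR: "polyR_le n k \<subseteq> polyR n"
  unfolding polyR_le_def by auto

lemma polyR_le_zero: "0 \<in> polyR_le n k"
  unfolding polyR_le_def by (simp add: polyR_zero)

lemma polyR_le_add: "p \<in> polyR_le n k \<Longrightarrow> q \<in> polyR_le n k \<Longrightarrow> p + q \<in> polyR_le n k"
  using keys_add[of p q] polyR_add[of p n q] unfolding polyR_le_def by blast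

lemma real_linear_on_subset: "real_linear_on S F \<Longrightarrow> T \<subseteq> S \<Longrightarrow> real_linear_on T F"
  unfolding real_linear_on_def by blast

lemma real_linear_on_polyR_le_sum:
  assumes F: "real_linear_on (polyR_le n k) F" and "finite K"
    and "\<And>m. m \<in> K \<Longrightarrow> x m \<in> polyR_le n k"
  shows "F (\<Sum>m\<in>K. x m) = (\<Sum>m\<in>K. F (x m))"
proof -
  have "F (const_poly 0 * 0) = const_poly 0 * F 0"
    using F polyR_le_zero unfolding real_linear_on_def by blast
  then have "F 0 = 0" by simp
  have "(\<Sum>m\<in>K. x m) \<in> polyR_le n k \<and> F (\<Sum>m\<in>K. x m) = (\<Sum>m\<in>K. F (x m))"
    using assms(2,3)
  proof (induction K rule: finite_induct)
    case empty then show ?case using polyR_le_zero \<open>F 0 = 0\<close> by simp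
  next
    case (insert a K)
    then have "x a \<in> polyR_le n k" "(\<Sum>m\<in>K. x m) \<in> polyR_le n k" by auto
    with F insert show ?case unfolding real_linear_on_def by (simp add: polyR_le_add)
  qed
  then show ?thesis ..
qed

lemma real_linear_on_polyR_le_expand:
  assumes F: "real_linear_on (polyR_le n k) F" and p: "p \<in> polyR_le n k"
  shows "F p = (\<Sum>m\<in>Poly_Mapping.keys p.
    const_poly (Poly_Mapping.lookup p m) * F (Poly_Mapping.single m 1))"
proof -
  have M: "m \<in> monomial_exps n k" if "m \<in> Poly_Mapping.keys p" for m
    using keys_subset_monomial_exps[OF p] that by blast
  have "F p = F (\<Sum>m\<in>Poly_Mapping.keys p.
      const_poly (Poly_Mapping.lookup p m) * Poly_Mapping.single m 1)"
    by (subst poly_mapping_eq_sum_single) (simp flip: single_eq_const_poly_mult)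
  also have "\<dots> = (\<Sum>m\<in>Poly_Mapping.keys p.
      F (const_poly (Poly_Mapping.lookup p m) * Poly_Mapping.single m 1))"
    using M by (intro real_linear_on_polyR_le_sum[OF F])
      (simp_all add: single_in_polyR_le flip: single_eq_const_poly_mult)
  also have "\<dots> = (\<Sum>m\<in>Poly_Mapping.keys p.
      const_poly (Poly_Mapping.lookup p m) * F (Poly_Mapping.single m 1))"
    using F M single_in_polyR_le unfolding real_linear_on_def by (intro sum.cong) auto
  finally show ?thesis .
qed

lemma real_linear_on_polyR_le_eqI:
  assumes "real_linear_on (polyR_le n k) F" "real_linear_on (polyR_le n k) G"
    and "\<And>g. g \<in> monomial_exps n k \<Longrightarrow> F (Poly_Mapping.single g 1) = G (Poly_Mapping.single g 1)"
    and p: "p \<in> polyR_le n k"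
  shows "F p = G p"
  using assms keys_subset_monomial_exps[OF p]
  by (simp add: real_linear_on_polyR_le_expand subset_iff cong: sum.cong)

section \<open>Operators dual to the monomial basis\<close>

lemma exists_is_diff_monomial_triangular:
  assumes "mdeg \<beta> \<le> k" and "q \<in> polyR n"
  shows "\<exists>P. is_diff n k P \<and>
    (\<forall>h. mdeg h \<le> mdeg \<beta> \<longrightarrow> P (Poly_Mapping.single h 1) = (if h = \<beta> then q else 0))"
proof -
  obtain L where L: "exp_of_vars L = \<beta>" using exp_of_vars_surj by blast
  then have len: "length L = mdeg \<beta>" using mdeg_exp_of_vars by metis
  define c where "c = partial_derivs_coeff L \<beta>"
  have "c \<noteq> 0" unfolding c_def using L partial_derivs_coeff_exp_of_vars by blast
  have "const_poly (1 / c) * q * const_poly c = const_poly (1 / c) * const_poly c * q"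
    by (simp add: ac_simps)
  also have "\<dots> = q" using \<open>c \<noteq> 0\<close> by (simp add: const_poly_mult_const_poly)
  finally have scale: "const_poly (1 / c) * q * const_poly c = q" .
  define P where "P p = const_poly (1 / c) * q * partial_derivs L p" for p
  have "is_diff n k P"
    unfolding P_def using assms len
    by (intro is_diff_mult_left is_diff_mono[OF is_diff_partial_derivs])
       (simp_all add: polyR_mult polyR_const_poly)
  moreover have "P (Poly_Mapping.single h 1) = (if h = \<beta> then q else 0)" if "mdeg h \<le> mdeg \<beta>" for h
    using that len L scale unfolding P_def c_def by (simp add: partial_derivs_single_one)
  ultimately show ?thesis by blast
qed

lemma exists_is_diff_dual_monomial:
  assumes "\<beta> \<in> monomial_exps n k" and "q \<in> polyR n"
  shows "\<exists>D. is_diff n k D \<and>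
    (\<forall>h\<in>monomial_exps n k. D (Poly_Mapping.single h 1) = (if h = \<beta> then q else 0))"
  using assms
proof (induction "k - mdeg \<beta>" arbitrary: \<beta> q rule: less_induct)
  case less
  let ?M = "monomial_exps n k"
  obtain P where P: "is_diff n k P"
    "\<forall>h. mdeg h \<le> mdeg \<beta> \<longrightarrow> P (Poly_Mapping.single h 1) = (if h = \<beta> then q else 0)"
    using exists_is_diff_monomial_triangular less.prems unfolding monomial_exps_def by blast
  define G where "G = {g \<in> ?M. mdeg \<beta> < mdeg g}"
  have "finite G" unfolding G_def using finite_monomial_exps by simp
  have "\<forall>g\<in>G. \<exists>E. is_diff n k E \<and>
    (\<forall>h\<in>?M. E (Poly_Mapping.single h 1) = (if h = g then P (Poly_Mapping.single g 1) else 0))"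
  proof
    fix g assume "g \<in> G"
    then have "k - mdeg g < k - mdeg \<beta>" "g \<in> ?M" unfolding G_def monomial_exps_def by auto
    moreover have "P (Poly_Mapping.single g 1) \<in> polyR n"
      using is_diff_polyR[OF P(1) single_in_polyR[OF \<open>g \<in> ?M\<close>]] .
    ultimately show "\<exists>E. is_diff n k E \<and>
      (\<forall>h\<in>?M. E (Poly_Mapping.single h 1) = (if h = g then P (Poly_Mapping.single g 1) else 0))"
      using less.hyps by blast
  qed
  from bchoice[OF this] obtain E where E: "\<forall>g\<in>G. is_diff n k (E g) \<and>
      (\<forall>h\<in>?M. E g (Poly_Mapping.single h 1) = (if h = g then P (Poly_Mapping.single g 1) else 0))"
    by blast
  define D where "D p = P p - (\<Sum>g\<in>G. E g p)" for p
  have "is_diff n k D"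
    unfolding D_def using P(1) E \<open>finite G\<close> by (intro is_diff_diff is_diff_sum) auto
  moreover have "D (Poly_Mapping.single h 1) = (if h = \<beta> then q else 0)" if h: "h \<in> ?M" for h
  proof -
    have "(\<Sum>g\<in>G. E g (Poly_Mapping.single h 1)) =
        (\<Sum>g\<in>G. if h = g then P (Poly_Mapping.single g 1) else 0)"
      using E h by (intro sum.cong) auto
    also have "\<dots> = (if h \<in> G then P (Poly_Mapping.single h 1) else 0)"
      using \<open>finite G\<close> by simp
    finally have sum_E: "(\<Sum>g\<in>G. E g (Poly_Mapping.single h 1)) =
        (if h \<in> G then P (Poly_Mapping.single h 1) else 0)" .
    show ?thesis
    proof (cases "h \<in> G")
      case True
      then have "h \<noteq> \<beta>" unfolding G_def by auto
      with True sum_E show ?thesis unfolding D_def by simp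
    next
      case False
      with h have "mdeg h \<le> mdeg \<beta>" unfolding G_def by auto
      with False sum_E P(2) show ?thesis unfolding D_def by simp
    qed
  qed
  ultimately show ?case by blast
qed

lemma exists_is_diff_on_monomials:
  assumes "\<And>g. g \<in> monomial_exps n k \<Longrightarrow> f g \<in> polyR n"
  shows "\<exists>D. is_diff n k D \<and> (\<forall>g\<in>monomial_exps n k. D (Poly_Mapping.single g 1) = f g)"
proof -
  let ?M = "monomial_exps n k"
  have "\<forall>\<beta>\<in>?M. \<exists>D. is_diff n k D \<and>
      (\<forall>g\<in>?M. D (Poly_Mapping.single g 1) = (if g = \<beta> then f \<beta> else 0))"
    using exists_is_diff_dual_monomial assms by blast
  from bchoice[OF this] obtain T where T: "\<forall>\<beta>\<in>?M. is_diff n k (T \<beta>) \<and>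
      (\<forall>g\<in>?M. T \<beta> (Poly_Mapping.single g 1) = (if g = \<beta> then f \<beta> else 0))"
    by blast
  define D where "D p = (\<Sum>\<beta>\<in>?M. T \<beta> p)" for p
  have "is_diff n k D"
    unfolding D_def using T by (intro is_diff_sum finite_monomial_exps) auto
  moreover have "D (Poly_Mapping.single g 1) = f g" if "g \<in> ?M" for g
  proof -
    have "D (Poly_Mapping.single g 1) = (\<Sum>\<beta>\<in>?M. if g = \<beta> then f \<beta> else 0)"
      unfolding D_def using T that by (intro sum.cong) auto
    with that finite_monomial_exps show ?thesis by simp
  qed
  ultimately show ?thesis by blast
qed

theorem mainTheorem2:
  fixes n k :: nat and A :: "rpoly \<Rightarrow> rpoly"
  assumes "real_linear_on (polyR_le n k) A"
    and "\<forall>p\<in>polyR_le n k. A p \<in> polyR n"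
  shows "\<exists>D. is_diff n k D \<and> (\<forall>p\<in>polyR_le n k. D p = A p)"
proof -
  have A_single: "A (Poly_Mapping.single g 1) \<in> polyR n" if "g \<in> monomial_exps n k" for g
    using assms(2) single_in_polyR_le[OF that] by blast
  obtain D where D: "is_diff n k D"
    "\<forall>g\<in>monomial_exps n k. D (Poly_Mapping.single g 1) = A (Poly_Mapping.single g 1)"
    using exists_is_diff_on_monomials[where f = "\<lambda>g. A (Poly_Mapping.single g 1)", OF A_single] by blast
  have "real_linear_on (polyR n) D" using is_diff_Suc[OF D(1)] by simp
  then have "real_linear_on (polyR_le n k) D"
    using polyR_le_subset_polyR by (rule real_linear_on_subset)
  with D(2) assms(1) have "\<forall>p\<in>polyR_le n k. D p = A p"
    by (blast intro: real_linear_on_polyR_le_eqI)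
  with D(1) show ?thesis by blast
qed

end
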